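(* Let $K,L>0$, let $A(p,q)=(p^2q)^{1/3}$ and $A^\delta(p,q)=\operatorname{sgn}(q)\min\left(\lvert A(p,q)\rvert,K\lvert p\rvert,L\lvert q\rvert\right)$. Define $A^{\delta,+}(p,q)=A^\delta(p^+,q^+)$ and $A^{\delta,-}(p,q)=A^\delta(p^-,q^-)$. Then \[ -A^\delta(p,q)=A^{\delta,+}(\lvert p\rvert,-q)+A^{\delta,-}(-\lvert p\rvert,-q)\quad\text{for all }p,q\in\mathbb R, \] and $A^{\delta,+}\in ND^+(\mathbb R^2)$, $A^{\delta,-}\in ND^-(\mathbb R^2)$.
   Context: Real cube root; $\operatorname{sgn}(q)=q/\lvert q\rvert$ for $q\ne0$ and $\operatorname{sgn}(0)=0$; $x^+=\max(x,0)$, $x^-=\min(x,0)$. For $x,y\in\mathbb R^N$, $x\le y$ means componentwise; $F\in ND(\mathbb R^N)$ means $x\le y\Rightarrow F(x)\le F(y)$; $ND^+(\mathbb R^N)$ (resp. $ND^-(\mathbb R^N)$) are the nondecreasing functions with values in $[0,\infty)$ (resp. $(-\infty,0]$). *)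

theory Defs
  imports Complex_Main
begin

text \<open>Real cube root: root 3 is the real (odd) root, defined also for negative arguments.\<close>
definition A :: "real \<Rightarrow> real \<Rightarrow> real" where
  "A p q = root 3 (p^2 * q)"

definition Adelta :: "real \<Rightarrow> real \<Rightarrow> real \<Rightarrow> real \<Rightarrow> real" where
  "Adelta K L p q = sgn q * min \<bar>A p q\<bar> (min (K * \<bar>p\<bar>) (L * \<bar>q\<bar>))"

definition Adelta_plus :: "real \<Rightarrow> real \<Rightarrow> real \<Rightarrow> real \<Rightarrow> real" where
  "Adelta_plus K L p q = Adelta K L (max p 0) (max q 0)"

definition Adelta_minus :: "real \<Rightarrow> real \<Rightarrow> real \<Rightarrow> real \<Rightarrow> real" where
  "Adelta_minus K L p q = Adelta K L (min p 0) (min q 0)"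

definition ND2 :: "(real \<Rightarrow> real \<Rightarrow> real) \<Rightarrow> bool" where
  "ND2 F \<longleftrightarrow> (\<forall>p1 q1 p2 q2. p1 \<le> p2 \<and> q1 \<le> q2 \<longrightarrow> F p1 q1 \<le> F p2 q2)"

definition ND2_plus :: "(real \<Rightarrow> real \<Rightarrow> real) \<Rightarrow> bool" where
  "ND2_plus F \<longleftrightarrow> ND2 F \<and> (\<forall>p q. F p q \<ge> 0)"

definition ND2_minus :: "(real \<Rightarrow> real \<Rightarrow> real) \<Rightarrow> bool" where
  "ND2_minus F \<longleftrightarrow> ND2 F \<and> (\<forall>p q. F p q \<le> 0)"

end

theory Submission
  imports Defs
begin

text \<open>Adelta is even in p and odd in q, and on the closed first quadrant it is a minimum of
  three nonnegative functions that are nondecreasing in (p, q). Oddness gives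
  -Adelta(p, q) = Adelta(|p|, -q); of the two summands on the right only the one matching the
  sign of -q can be nonzero, and it equals Adelta(|p|, -q) by evenness. Finally
  Adelta_minus(p, q) = -Adelta_plus(-p, -q), so monotonicity of Adelta_minus follows from that
  of Adelta_plus.\<close>

lemma A_uminus_left: "A (- p) q = A p q"
  by (simp add: A_def)

lemma A_uminus_right: "A p (- q) = - A p q"
  by (simp add: A_def real_root_minus)

lemma Adelta_uminus_left: "Adelta K L (- p) q = Adelta K L p q"
  by (simp add: Adelta_def A_uminus_left)

lemma Adelta_abs_left: "Adelta K L \<bar>p\<bar> q = Adelta K L p q"
  by (cases "p \<ge> 0") (auto simp: Adelta_uminus_left)

lemma Adelta_uminus_right: "Adelta K L p (- q) = - Adelta K L p q"
  by (simp add: Adelta_def A_uminus_right sgn_minus)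

lemma Adelta_zero_right [simp]: "Adelta K L p 0 = 0"
  by (simp add: Adelta_def)

lemma Adelta_nonneg:
  assumes "K \<ge> 0" "L \<ge> 0" "q \<ge> 0"
  shows "Adelta K L p q \<ge> 0"
  using assms by (cases "q = 0") (auto simp: Adelta_def)

lemma Adelta_mono_nonneg:
  assumes K: "K \<ge> 0" and L: "L \<ge> 0"
    and p: "0 \<le> p1" "p1 \<le> p2" and q: "0 \<le> q1" "q1 \<le> q2"
  shows "Adelta K L p1 q1 \<le> Adelta K L p2 q2"
proof (cases "q1 = 0")
  case True
  then show ?thesis using Adelta_nonneg[OF K L] q by simp
next
  case False
  with q have "q1 > 0" "q2 > 0" by auto
  have "p1\<^sup>2 * q1 \<le> p2\<^sup>2 * q2"
    using p q by (intro mult_mono power_mono) auto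
  then have "\<bar>A p1 q1\<bar> \<le> \<bar>A p2 q2\<bar>"
    using p q by (simp add: A_def)
  moreover have "K * \<bar>p1\<bar> \<le> K * \<bar>p2\<bar>" "L * \<bar>q1\<bar> \<le> L * \<bar>q2\<bar>"
    using p q K L by (auto intro: mult_left_mono)
  ultimately show ?thesis
    using \<open>q1 > 0\<close> \<open>q2 > 0\<close> by (simp add: Adelta_def min.coboundedI1 min.coboundedI2)
qed

lemma Adelta_minus_eq_uminus_Adelta_plus:
  "Adelta_minus K L p q = - Adelta_plus K L (- p) (- q)"
proof -
  have "min p 0 = - max (- p) 0" "min q 0 = - max (- q) 0" by auto
  then show ?thesis
    by (simp add: Adelta_minus_def Adelta_plus_def Adelta_uminus_left Adelta_uminus_right)
qed

lemma uminus_Adelta_eq_Adelta_plus_Adelta_minus: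
  "- Adelta K L p q = Adelta_plus K L \<bar>p\<bar> (- q) + Adelta_minus K L (- \<bar>p\<bar>) (- q)"
proof -
  have "- Adelta K L p q = Adelta K L \<bar>p\<bar> (- q)"
    by (simp add: Adelta_uminus_right Adelta_abs_left)
  then show ?thesis
    unfolding Adelta_plus_def Adelta_minus_def
    by (cases "q \<le> 0") (auto simp: Adelta_uminus_left min_def max_def)
qed

lemma ND2_plus_Adelta_plus:
  assumes "K \<ge> 0" "L \<ge> 0"
  shows "ND2_plus (Adelta_plus K L)"
  unfolding ND2_plus_def ND2_def Adelta_plus_def
  by (auto intro!: Adelta_mono_nonneg Adelta_nonneg max.mono assms)

lemma ND2_minus_Adelta_minus:
  assumes "K \<ge> 0" "L \<ge> 0"
  shows "ND2_minus (Adelta_minus K L)"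
  using ND2_plus_Adelta_plus[OF assms]
  unfolding ND2_minus_def ND2_plus_def ND2_def Adelta_minus_eq_uminus_Adelta_plus
  by auto

theorem mainTheorem6:
  fixes K L :: real
  assumes "K > 0" and "L > 0"
  shows "(\<forall>p q. - Adelta K L p q
             = Adelta_plus K L \<bar>p\<bar> (- q) + Adelta_minus K L (- \<bar>p\<bar>) (- q))
         \<and> ND2_plus (Adelta_plus K L) \<and> ND2_minus (Adelta_minus K L)"
  using assms uminus_Adelta_eq_Adelta_plus_Adelta_minus
    ND2_plus_Adelta_plus ND2_minus_Adelta_minus by simp

end
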